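(* Let all notions be as in the context. (1) If $(\Gamma,\mathsf{eval}\ e,S)\Longrightarrow^{*}(\Delta,\mathsf{eval}\ w,S)$ is a balanced evaluation (with $w$ a weak head normal form), then $\Gamma;\mathrm{upd}(S);e\Downarrow\Delta;w$. (2) If $(\Gamma,\mathsf{match}\ A\ m,S)\Longrightarrow^{*}(\Delta,\mathsf{match}\ [\,]\ r,S)$ is a balanced evaluation (with $r$ a matching result), then $\Gamma;\mathrm{upd}(S);A;m\Downarrow_M\Delta;r$.
   Context: The language $\lambda_{\mathrm{PMC}}$ (in normalized form). Expressions: $e ::= x \mid e\,y \mid \lambda m \mid c(y_1,\ldots,y_n)$, where $x,y,y_i$ are variables, $c$ ranges over constructors, and application arguments and constructor arguments are variables. Matchings: $m ::= \mathsf{ret}(e) \mid \mathsf{fail} \mid p \Rightarrow m \mid y \triangleright m \mid m_1 \mid m_2 \mid (m\ \mathsf{where}\ \{x_1=e_1;\ldots;x_n=e_n\})$ (return expression, failure, pattern match, argument supply, alternative, local possibly recursive bindings). Patterns: $p ::= x \mid c(p_1,\ldots,p_n)$ (patterns may be nested). The matching $y_1 \triangleright p_1 \Rightarrow \cdots \Rightarrow y_n \triangleright p_n \Rightarrow m$ associates to the right: $y_1 \triangleright (p_1 \Rightarrow (y_2 \triangleright (\cdots (p_n \Rightarrow m)\cdots)))$. $m[y/x]$ denotes capture-avoiding substitution of $y$ for free occurrences of $x$. Arity: $\mathrm{ar}(\mathsf{ret}(e))=0$, $\mathrm{ar}(\mathsf{fail})=0$, $\mathrm{ar}(p\Rightarrow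 m)=1+\mathrm{ar}(m)$, $\mathrm{ar}(y\triangleright m)=\max(0,\mathrm{ar}(m)-1)$, $\mathrm{ar}(m_1\mid m_2)=\mathrm{ar}(m_1)$ if $\mathrm{ar}(m_1)=\mathrm{ar}(m_2)$ (undefined otherwise), $\mathrm{ar}(m\ \mathsf{where}\ b)=\mathrm{ar}(m)$. Weak head normal forms: $w ::= \lambda m$ with $\mathrm{ar}(m)>0$, or $c(y_1,\ldots,y_n)$. Matching results: $r ::= \mathsf{ret}(e) \mid \mathsf{fail}$. A heap $\Gamma,\Delta,\Theta$ is a finite map from variables to expressions; $\Gamma[y\mapsto e]$ maps $y$ to $e$ and otherwise agrees with $\Gamma$. An argument stack $A$ is a list of variables; for such a list define $[\,]\triangleright e = e$ and $(y:ys)\triangleright e = ys \triangleright (e\,y)$. $L$ is a set of variables. Big-step semantics: two mutually inductive judgments $\Gamma;L;e \Downarrow \Delta;w$ and $\Gamma;L;A;m \Downarrow_M \Delta;r$ defined by the rules: (Whnf) $\Gamma;L;w \Downarrow \Gamma;w$. (Sat) if $\mathrm{ar}(m)=0$, $\Gamma;L;[\,];m \Downarrow_M \Delta;\mathsf{ret}(e)$ and $\Delta;L;e\Downarrow\Theta;w$, then $\Gamma;L;\lambda m \Downarrow \Theta;w$. (Var) if $\Gamma;L\cup\{y\};e \Downarrow \Delta;w$ then $\Gamma[y\mapsto e];L;y \Downarrow \Delta[y\mapsto w];w$. (App) if $\Gamma;L;e\Downarrow\Delta;\lambda m$ and $\Delta;L;\lambda(y\triangleright m)\Downarrow\Theta;w$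 then $\Gamma;L;(e\,y)\Downarrow\Theta;w$. (Return) $\Gamma;L;A;\mathsf{ret}(e)\Downarrow_M\Gamma;\mathsf{ret}(A\triangleright e)$. (Fail) $\Gamma;L;A;\mathsf{fail}\Downarrow_M\Gamma;\mathsf{fail}$. (Arg) if $\Gamma;L;(y:A);m\Downarrow_M\Delta;r$ then $\Gamma;L;A;y\triangleright m\Downarrow_M\Delta;r$. (Bind) if $\Gamma;L;A;m[y/x]\Downarrow_M\Delta;r$ then $\Gamma;L;(y:A);x\Rightarrow m\Downarrow_M\Delta;r$. (Cons1) if $\Gamma;L;y\Downarrow\Delta;c(y_1,\ldots,y_n)$ and $\Delta;L;A;y_1\triangleright p_1\Rightarrow\cdots\Rightarrow y_n\triangleright p_n\Rightarrow m\Downarrow_M\Theta;r$ then $\Gamma;L;(y:A);c(p_1,\ldots,p_n)\Rightarrow m\Downarrow_M\Theta;r$. (Cons2) if $\Gamma;L;y\Downarrow\Delta;c'(y_1,\ldots,y_k)$ with $c\neq c'$ then $\Gamma;L;(y:A);c(p_1,\ldots,p_n)\Rightarrow m\Downarrow_M\Delta;\mathsf{fail}$. (Alt1) if $\Gamma;L;A;m_1\Downarrow_M\Delta;\mathsf{ret}(e)$ then $\Gamma;L;A;(m_1\mid m_2)\Downarrow_M\Delta;\mathsf{ret}(e)$. (Alt2) if $\Gamma;L;A;m_1\Downarrow_M\Delta;\mathsf{fail}$ and $\Delta;L;A;m_2\Downarrow_M\Theta;r$ then $\Gamma;L;A;(m_1\mid m_2)\Downarrow_M\Theta;r$. (Where)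 if $\Gamma[y_i\mapsto\hat e_i];L;A;\hat m\Downarrow_M\Delta;r$ then $\Gamma;L;A;(m\ \mathsf{where}\ \{x_i=e_i\})\Downarrow_M\Delta;r$, where the $y_i$ are fresh (occur neither free nor bound in $\Gamma$, $L$, $A$, or $m$), $\hat e_i=e_i[y_1/x_1,\ldots,y_n/x_n]$ and $\hat m=m[y_1/x_1,\ldots,y_n/x_n]$. Abstract machine. Controls: $C ::= \mathsf{eval}\ e \mid \mathsf{match}\ A\ m$. Continuations: $k ::= y \mid\ !y \mid \$ \mid ?(A,m) \mid @(A, c(\vec p)\Rightarrow m)$. A return stack $S$ is a list of continuations. Configurations are triples $(\Gamma, C, S)$. Transitions $\Longrightarrow$: (App1) $(\Gamma,\mathsf{eval}\ (e\,y),S)\Longrightarrow(\Gamma,\mathsf{eval}\ e,y:S)$. (App2) $(\Gamma,\mathsf{eval}\ \lambda m,y:S)\Longrightarrow(\Gamma,\mathsf{eval}\ \lambda(y\triangleright m),S)$ if $\mathrm{ar}(m)>0$. (Sat) $(\Gamma,\mathsf{eval}\ \lambda m,S)\Longrightarrow(\Gamma,\mathsf{match}\ [\,]\ m,\$:S)$ if $\mathrm{ar}(m)=0$. (Var) $(\Gamma[y\mapsto e],\mathsf{eval}\ y,S)\Longrightarrow(\Gamma,\mathsf{eval}\ e,!y:S)$. (Update) $(\Gamma,\mathsf{eval}\ w,!y:S)\Longrightarrow(\Gamma[y\mapsto w],\mathsf{eval}\ w,S)$. (Return1A) $(\Gamma,\mathsf{match}\ A\ \mathsf{ret}(e),S)\Longrightarrow(\Gamma,\mathsf{match}\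 [\,]\ \mathsf{ret}(A\triangleright e),S)$ if $A\neq[\,]$. (Return1B) $(\Gamma,\mathsf{match}\ [\,]\ \mathsf{ret}(e),\$:S)\Longrightarrow(\Gamma,\mathsf{eval}\ e,S)$. (Return2) $(\Gamma,\mathsf{match}\ [\,]\ \mathsf{ret}(e),?(A',m):S)\Longrightarrow(\Gamma,\mathsf{match}\ [\,]\ \mathsf{ret}(e),S)$. (Bind) $(\Gamma,\mathsf{match}\ (y:A)\ (x\Rightarrow m),S)\Longrightarrow(\Gamma,\mathsf{match}\ A\ m[y/x],S)$. (Cons1) $(\Gamma,\mathsf{match}\ (y:A)\ (c(\vec p)\Rightarrow m),S)\Longrightarrow(\Gamma,\mathsf{eval}\ y,@(A,c(\vec p)\Rightarrow m):S)$. (Cons2) $(\Gamma,\mathsf{eval}\ c(y_1,\ldots,y_n),@(A,c(p_1,\ldots,p_n)\Rightarrow m):S)\Longrightarrow(\Gamma,\mathsf{match}\ A\ (y_1\triangleright p_1\Rightarrow\cdots\Rightarrow y_n\triangleright p_n\Rightarrow m),S)$. (Fail) $(\Gamma,\mathsf{eval}\ c'(y_1,\ldots,y_k),@(A,c(p_1,\ldots,p_n)\Rightarrow m):S)\Longrightarrow(\Gamma,\mathsf{match}\ [\,]\ \mathsf{fail},S)$ if $c\neq c'$. (Arg) $(\Gamma,\mathsf{match}\ A\ (y\triangleright m),S)\Longrightarrow(\Gamma,\mathsf{match}\ (y:A)\ m,S)$. (Alt1) $(\Gamma,\mathsf{match}\ A\ (m_1\mid m_2),S)\Longrightarrow(\Gamma,\mathsf{match}\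 A\ m_1,?(A,m_2):S)$. (Alt2) $(\Gamma,\mathsf{match}\ A'\ \mathsf{fail},?(A,m):S)\Longrightarrow(\Gamma,\mathsf{match}\ A\ m,S)$. (Where) $(\Gamma,\mathsf{match}\ A\ (m\ \mathsf{where}\ \{x_i=e_i\}),S)\Longrightarrow(\Gamma[y_i\mapsto\hat e_i],\mathsf{match}\ A\ \hat m,S)$ with $y_i$ fresh, $\hat e_i=e_i[y_1/x_1,\ldots,y_n/x_n]$, $\hat m=m[y_1/x_1,\ldots,y_n/x_n]$. $\Longrightarrow^{*}$ is the reflexive–transitive closure of $\Longrightarrow$. A sequence of transitions $(\Gamma,C,S)\Longrightarrow^{*}(\Delta,C',S)$ is balanced if the initial and final return stacks are identical and every intermediate return stack has the form $k_1:k_2:\cdots:k_n:S$ (an extension of the initial stack). For a return stack $S$, $\mathrm{upd}(S)=\{y : (!y)\in S\}$ is the set of variables marked for update in $S$. *)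

theory Defs
  imports Main
begin

type_synonym var = nat
type_synonym con = nat

datatype pat = PVar var | PCon con "pat list"

datatype expr =
    Var var
  | App expr var
  | Lam mtch
  | Con con "var list"
and mtch =
    Ret expr
  | Fail
  | PMatch pat mtch
  | Arg var mtch
  | Alt mtch mtch
  | Where mtch "(var \<times> expr) list"

primrec pv :: "pat \<Rightarrow> var list" where
  "pv (PVar x) = [x]"
| "pv (PCon c ps) = concat (map pv ps)"

primrec psub :: "(var \<Rightarrow> var) \<Rightarrow> pat \<Rightarrow> pat" where
  "psub \<sigma> (PVar x) = PVar (\<sigma> x)"
| "psub \<sigma> (PCon c ps) = PCon c (map (psub \<sigma>) ps)"

fun fv_e :: "expr \<Rightarrow> var set" and fv_m :: "mtch \<Rightarrow> var set" where
  "fv_e (Var x) = {x}"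
| "fv_e (App e y) = insert y (fv_e e)"
| "fv_e (Lam m) = fv_m m"
| "fv_e (Con c ys) = set ys"
| "fv_m (Ret e) = fv_e e"
| "fv_m Fail = {}"
| "fv_m (PMatch p m) = fv_m m - set (pv p)"
| "fv_m (Arg y m) = insert y (fv_m m)"
| "fv_m (Alt m1 m2) = fv_m m1 \<union> fv_m m2"
| "fv_m (Where m bs) =
     (fv_m m \<union> (\<Union>(x, e)\<in>set bs. fv_e e)) - fst ` set bs"

fun vars_e :: "expr \<Rightarrow> var set" and vars_m :: "mtch \<Rightarrow> var set" where
  "vars_e (Var x) = {x}"
| "vars_e (App e y) = insert y (vars_e e)"
| "vars_e (Lam m) = vars_m m"
| "vars_e (Con c ys) = set ys"
| "vars_m (Ret e) = vars_e e"
| "vars_m Fail = {}"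
| "vars_m (PMatch p m) = vars_m m \<union> set (pv p)"
| "vars_m (Arg y m) = insert y (vars_m m)"
| "vars_m (Alt m1 m2) = vars_m m1 \<union> vars_m m2"
| "vars_m (Where m bs) =
     vars_m m \<union> (\<Union>(x, e)\<in>set bs. insert x (vars_e e))"

definition fresh_var :: "var set \<Rightarrow> var" where
  "fresh_var A = (LEAST n. n \<notin> A)"

text \<open>Choose names for the binders \<open>bs\<close>: a binder keeps its name unless it
  would capture a variable of the set \<open>A\<close> (initially the image of the free variables
  of the binding construct under the substitution), in which case it is renamed to a
  fresh variable.\<close>
fun rebind :: "(var \<Rightarrow> var) \<Rightarrow> var set \<Rightarrow> var list \<Rightarrow> (var \<Rightarrow> var)" where
  "rebind \<sigma> A [] = \<sigma>"
| "rebind \<sigma> A (b # bs) =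
     (let b' = (if b \<in> A then fresh_var A else b)
      in rebind (\<sigma>(b := b')) (insert b' A) bs)"

fun subst_e :: "(var \<Rightarrow> var) \<Rightarrow> expr \<Rightarrow> expr"
and subst_m :: "(var \<Rightarrow> var) \<Rightarrow> mtch \<Rightarrow> mtch" where
  "subst_e \<sigma> (Var x) = Var (\<sigma> x)"
| "subst_e \<sigma> (App e y) = App (subst_e \<sigma> e) (\<sigma> y)"
| "subst_e \<sigma> (Lam m) = Lam (subst_m \<sigma> m)"
| "subst_e \<sigma> (Con c ys) = Con c (map \<sigma> ys)"
| "subst_m \<sigma> (Ret e) = Ret (subst_e \<sigma> e)"
| "subst_m \<sigma> Fail = Fail"
| "subst_m \<sigma> (PMatch p m) =
     (let \<sigma>' = rebind \<sigma> (\<sigma> ` fv_m (PMatch p m)) (pv p)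
      in PMatch (psub \<sigma>' p) (subst_m \<sigma>' m))"
| "subst_m \<sigma> (Arg y m) = Arg (\<sigma> y) (subst_m \<sigma> m)"
| "subst_m \<sigma> (Alt m1 m2) = Alt (subst_m \<sigma> m1) (subst_m \<sigma> m2)"
| "subst_m \<sigma> (Where m bs) =
     (let \<sigma>' = rebind \<sigma> (\<sigma> ` fv_m (Where m bs)) (map fst bs)
      in Where (subst_m \<sigma>' m) (map (\<lambda>(x, e). (\<sigma>' x, subst_e \<sigma>' e)) bs))"

definition ren :: "var list \<Rightarrow> var list \<Rightarrow> var \<Rightarrow> var" where
  "ren xs ys x = (case map_of (zip xs ys) x of Some y \<Rightarrow> y | None \<Rightarrow> x)"

definition subst1_m :: "var \<Rightarrow> var \<Rightarrow> mtch \<Rightarrow> mtch" where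
  "subst1_m y x m = subst_m (id(x := y)) m"

text \<open>\<open>None\<close> encodes "undefined".\<close>
fun ar :: "mtch \<Rightarrow> nat option" where
  "ar (Ret e) = Some 0"
| "ar Fail = Some 0"
| "ar (PMatch p m) = map_option Suc (ar m)"
| "ar (Arg y m) = map_option (\<lambda>n. n - 1) (ar m)"   (* max(0, ar m - 1) *)
| "ar (Alt m1 m2) = (if ar m1 = ar m2 then ar m1 else None)"
| "ar (Where m bs) = ar m"

fun is_whnf :: "expr \<Rightarrow> bool" where
  "is_whnf (Lam m) = (\<exists>n. ar m = Some n \<and> n > 0)"
| "is_whnf (Con c ys) = True"
| "is_whnf _ = False"

fun is_result :: "mtch \<Rightarrow> bool" where
  "is_result (Ret e) = True"
| "is_result Fail = True"
| "is_result _ = False"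

type_synonym heap = "var \<rightharpoonup> expr"

definition heap_vars :: "heap \<Rightarrow> var set" where
  "heap_vars \<Gamma> = dom \<Gamma> \<union> (\<Union>e\<in>ran \<Gamma>. vars_e e)"

definition apps :: "var list \<Rightarrow> expr \<Rightarrow> expr" where
  "apps A e = foldl App e A"

definition chain :: "var list \<Rightarrow> pat list \<Rightarrow> mtch \<Rightarrow> mtch" where
  "chain ys ps m = foldr (\<lambda>(y, p) m'. Arg y (PMatch p m')) (zip ys ps) m"

inductive bs_eval :: "heap \<Rightarrow> var set \<Rightarrow> expr \<Rightarrow> heap \<Rightarrow> expr \<Rightarrow> bool"
  and bs_match :: "heap \<Rightarrow> var set \<Rightarrow> var list \<Rightarrow> mtch \<Rightarrow> heap \<Rightarrow> mtch \<Rightarrow> bool"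
where
  Whnf: "is_whnf w \<Longrightarrow> bs_eval \<Gamma> L w \<Gamma> w"
| Sat: "ar m = Some 0 \<Longrightarrow> bs_match \<Gamma> L [] m \<Delta> (Ret e) \<Longrightarrow> bs_eval \<Delta> L e \<Theta> w
        \<Longrightarrow> bs_eval \<Gamma> L (Lam m) \<Theta> w"
| Var: "y \<notin> dom \<Gamma> \<Longrightarrow> bs_eval \<Gamma> (insert y L) e \<Delta> w
        \<Longrightarrow> bs_eval (\<Gamma>(y \<mapsto> e)) L (Var y) (\<Delta>(y \<mapsto> w)) w"
| App: "bs_eval \<Gamma> L e \<Delta> (Lam m) \<Longrightarrow> bs_eval \<Delta> L (Lam (Arg y m)) \<Theta> w
        \<Longrightarrow> bs_eval \<Gamma> L (App e y) \<Theta> w"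
| Return: "bs_match \<Gamma> L A (Ret e) \<Gamma> (Ret (apps A e))"
| MFail: "bs_match \<Gamma> L A Fail \<Gamma> Fail"
| MArg: "bs_match \<Gamma> L (y # A) m \<Delta> r \<Longrightarrow> bs_match \<Gamma> L A (Arg y m) \<Delta> r"
| Bind: "bs_match \<Gamma> L A (subst1_m y x m) \<Delta> r
        \<Longrightarrow> bs_match \<Gamma> L (y # A) (PMatch (PVar x) m) \<Delta> r"
| Cons1: "bs_eval \<Gamma> L (Var y) \<Delta> (Con c ys) \<Longrightarrow> length ys = length ps
        \<Longrightarrow> bs_match \<Delta> L A (chain ys ps m) \<Theta> r
        \<Longrightarrow> bs_match \<Gamma> L (y # A) (PMatch (PCon c ps) m) \<Theta> r"
| Cons2: "bs_eval \<Gamma> L (Var y) \<Delta> (Con c' ys) \<Longrightarrow> c \<noteq> c'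
        \<Longrightarrow> bs_match \<Gamma> L (y # A) (PMatch (PCon c ps) m) \<Delta> Fail"
| Alt1: "bs_match \<Gamma> L A m1 \<Delta> (Ret e) \<Longrightarrow> bs_match \<Gamma> L A (Alt m1 m2) \<Delta> (Ret e)"
| Alt2: "bs_match \<Gamma> L A m1 \<Delta> Fail \<Longrightarrow> bs_match \<Delta> L A m2 \<Theta> r
        \<Longrightarrow> bs_match \<Gamma> L A (Alt m1 m2) \<Theta> r"
| Where: "length ys = length bs \<Longrightarrow> distinct ys
        \<Longrightarrow> set ys \<inter> (heap_vars \<Gamma> \<union> L \<union> set A \<union> vars_m (Where m bs)) = {}
        \<Longrightarrow> bs_match (\<Gamma>(ys [\<mapsto>] map (\<lambda>(x, e). subst_e (ren (map fst bs) ys) e) bs)) L A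
               (subst_m (ren (map fst bs) ys) m) \<Delta> r
        \<Longrightarrow> bs_match \<Gamma> L A (Where m bs) \<Delta> r"

datatype ctrl = Eval expr | Match "var list" mtch

datatype cont =
    KArg var
  | KUpd var
  | KRet
  | KAlt "var list" mtch
  | KCon "var list" con "pat list" mtch

type_synonym conf = "heap \<times> ctrl \<times> cont list"

fun cont_vars :: "cont \<Rightarrow> var set" where
  "cont_vars (KArg y) = {y}"
| "cont_vars (KUpd y) = {y}"
| "cont_vars KRet = {}"
| "cont_vars (KAlt A m) = set A \<union> vars_m m"
| "cont_vars (KCon A c ps m) = set A \<union> vars_m (PMatch (PCon c ps) m)"

definition stack_vars :: "cont list \<Rightarrow> var set" where
  "stack_vars S = (\<Union>k\<in>set S. cont_vars k)"

definition upd :: "cont list \<Rightarrow> var set" where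
  "upd S = {y. KUpd y \<in> set S}"

inductive step :: "conf \<Rightarrow> conf \<Rightarrow> bool" where
  App1: "step (\<Gamma>, Eval (App e y), S) (\<Gamma>, Eval e, KArg y # S)"
| App2: "ar m = Some n \<Longrightarrow> n > 0
         \<Longrightarrow> step (\<Gamma>, Eval (Lam m), KArg y # S) (\<Gamma>, Eval (Lam (Arg y m)), S)"
| Sat: "ar m = Some 0 \<Longrightarrow> step (\<Gamma>, Eval (Lam m), S) (\<Gamma>, Match [] m, KRet # S)"
| Var: "y \<notin> dom \<Gamma> \<Longrightarrow> step (\<Gamma>(y \<mapsto> e), Eval (Var y), S) (\<Gamma>, Eval e, KUpd y # S)"
| Update: "is_whnf w \<Longrightarrow> step (\<Gamma>, Eval w, KUpd y # S) (\<Gamma>(y \<mapsto> w), Eval w, S)"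
| Return1A: "A \<noteq> [] \<Longrightarrow> step (\<Gamma>, Match A (Ret e), S) (\<Gamma>, Match [] (Ret (apps A e)), S)"
| Return1B: "step (\<Gamma>, Match [] (Ret e), KRet # S) (\<Gamma>, Eval e, S)"
| Return2: "step (\<Gamma>, Match [] (Ret e), KAlt A' m # S) (\<Gamma>, Match [] (Ret e), S)"
| Bind: "step (\<Gamma>, Match (y # A) (PMatch (PVar x) m), S) (\<Gamma>, Match A (subst1_m y x m), S)"
| Cons1: "step (\<Gamma>, Match (y # A) (PMatch (PCon c ps) m), S)
               (\<Gamma>, Eval (Var y), KCon A c ps m # S)"
| Cons2: "length ys = length ps
          \<Longrightarrow> step (\<Gamma>, Eval (Con c ys), KCon A c ps m # S) (\<Gamma>, Match A (chain ys ps m), S)"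
| Fail: "c \<noteq> c' \<Longrightarrow> step (\<Gamma>, Eval (Con c' ys), KCon A c ps m # S) (\<Gamma>, Match [] Fail, S)"
| Arg: "step (\<Gamma>, Match A (Arg y m), S) (\<Gamma>, Match (y # A) m, S)"
| Alt1: "step (\<Gamma>, Match A (Alt m1 m2), S) (\<Gamma>, Match A m1, KAlt A m2 # S)"
| Alt2: "step (\<Gamma>, Match A' Fail, KAlt A m # S) (\<Gamma>, Match A m, S)"
| Where: "length ys = length bs \<Longrightarrow> distinct ys
          \<Longrightarrow> set ys \<inter> (heap_vars \<Gamma> \<union> set A \<union> vars_m (Where m bs) \<union> stack_vars S) = {}
          \<Longrightarrow> step (\<Gamma>, Match A (Where m bs), S)
                   (\<Gamma>(ys [\<mapsto>] map (\<lambda>(x, e). subst_e (ren (map fst bs) ys) e) bs),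
                    Match A (subst_m (ren (map fst bs) ys) m), S)"

definition balanced :: "conf \<Rightarrow> conf \<Rightarrow> bool" where
  "balanced c c' \<longleftrightarrow>
     snd (snd c') = snd (snd c) \<and>
     (\<exists>cs. cs \<noteq> [] \<and> hd cs = c \<and> last cs = c' \<and>
        (\<forall>i < length cs - 1. step (cs ! i) (cs ! Suc i)) \<and>
        (\<forall>d \<in> set cs. \<exists>ks. snd (snd d) = ks @ snd (snd c)))"

end

theory Submission
  imports Defs
begin

(* Induction on the length of the balanced run. A first step that keeps the return stack S
   leaves a shorter balanced run. A first step that pushes a continuation k is matched by the
   first later step that pops k: the run before it is balanced over k # S, the popping step is
   determined by k, and the run after it is balanced over S again; both are shorter, and they
   supply the premises of the big-step rule for the construct that pushed k. Only the Var rule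
   pushes an update marker, matching the extension of L in the big-step Var rule. A run that
   reaches a weak head normal form or a matching result over S must stop there, as every step
   from such a configuration pops. *)

abbreviation stack :: "conf \<Rightarrow> cont list" where
  "stack c \<equiv> snd (snd c)"

definition extends_stack :: "cont list \<Rightarrow> conf \<Rightarrow> bool" where
  "extends_stack S c \<longleftrightarrow> (\<exists>ks. stack c = ks @ S)"

inductive run_above :: "cont list \<Rightarrow> nat \<Rightarrow> conf \<Rightarrow> conf \<Rightarrow> bool" for S where
  run_above_refl: "extends_stack S c \<Longrightarrow> run_above S 0 c c"
| run_above_step: "extends_stack S c \<Longrightarrow> step c c1 \<Longrightarrow> run_above S n c1 c2
    \<Longrightarrow> run_above S (Suc n) c c2"

lemma run_above_extends_stack: "run_above S n c c' \<Longrightarrow> extends_stack S c"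
  by (induction rule: run_above.induct) auto

lemma run_above_Suc_first_step:
  assumes "run_above S (Suc n) c c'"
  obtains c1 where "step c c1" "run_above S n c1 c'"
  using assms by (cases rule: run_above.cases) auto

lemma not_extends_stack_Cons: "stack c = S \<Longrightarrow> \<not> extends_stack (k # S) c"
  by (auto simp: extends_stack_def dest: arg_cong[of _ _ length])

lemma run_above_of_steps:
  assumes "cs \<noteq> []" "\<forall>i < length cs - 1. step (cs ! i) (cs ! Suc i)"
    and "\<forall>d \<in> set cs. extends_stack S d"
  shows "run_above S (length cs - 1) (hd cs) (last cs)"
  using assms
proof (induction cs)
  case (Cons c cs)
  show ?case
  proof (cases cs)
    case Nil
    with Cons.prems show ?thesis by (auto intro: run_above_refl)
  next
    case (Cons c1 cs')
    have "\<forall>i < length cs - 1. step (cs ! i) (cs ! Suc i)"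
    proof (intro allI impI)
      fix i assume "i < length cs - 1"
      then have "Suc i < length (c # cs) - 1" by simp
      with Cons.prems(2) have "step ((c # cs) ! Suc i) ((c # cs) ! Suc (Suc i))" by blast
      then show "step (cs ! i) (cs ! Suc i)" by simp
    qed
    with Cons.IH Cons.prems(3) \<open>cs = c1 # cs'\<close>
    have "run_above S (length cs - 1) c1 (last cs)" by auto
    moreover have "step c c1" using Cons.prems(2) \<open>cs = c1 # cs'\<close> by force
    ultimately show ?thesis
      using Cons.prems(3) \<open>cs = c1 # cs'\<close> by (auto intro: run_above_step)
  qed
qed simp

lemma balanced_imp_run_above:
  "balanced c c' \<Longrightarrow> \<exists>n. run_above (stack c) n c c'"
  unfolding balanced_def using run_above_of_steps[of _ "stack c"]
  by (auto simp: extends_stack_def)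

lemma step_stack_cases:
  assumes "step c c'"
  obtains "stack c' = stack c" | k where "stack c = k # stack c'" | k where "stack c' = k # stack c"
  using assms by (induction rule: step.induct) auto

lemma run_above_first_return:
  assumes "run_above S n c c'" "stack c = ks @ k # S" "stack c' = S"
  shows "\<exists>j d d'. j < n \<and> run_above (k # S) j c d \<and> stack d = k # S
    \<and> step d d' \<and> stack d' = S \<and> run_above S (n - Suc j) d' c'"
  using assms
proof (induction arbitrary: ks rule: run_above.induct)
  case (run_above_refl c)
  then show ?case by (auto dest: arg_cong[of _ _ length])
next
  case (run_above_step c c1 n c2)
  have "extends_stack (k # S) c" using run_above_step.prems by (auto simp: extends_stack_def)
  show ?case
  proof (cases "stack c = k # S \<and> stack c1 = S")
    case True
    with run_above_step \<open>extends_stack (k # S) c\<close> show ?thesis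
      by (intro exI[of _ 0] exI[of _ c] exI[of _ c1]) (auto intro: run_above_refl)
  next
    case False
    obtain ks' where "stack c1 = ks' @ k # S"
      using run_above_step.hyps(2) run_above_step.prems(1) False
      by (cases rule: step_stack_cases) (auto simp: Cons_eq_append_conv)
    with run_above_step.IH run_above_step.prems(2) obtain j d d' where
      "j < n" "run_above (k # S) j c1 d" "stack d = k # S" "step d d'" "stack d' = S"
      "run_above S (n - Suc j) d' c2" by blast
    moreover have "run_above (k # S) (Suc j) c d"
      using \<open>extends_stack (k # S) c\<close> run_above_step.hyps(2) \<open>run_above (k # S) j c1 d\<close>
      by (rule run_above.run_above_step)
    ultimately show ?thesis by (intro exI[of _ "Suc j"] exI[of _ d] exI[of _ d'] conjI) simp_all
  qed
qed

lemma run_above_push_split: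
  assumes "run_above S n (\<Gamma>, C, k # S) (\<Delta>, C', S)"
  obtains j d d' where "j < n" "run_above (k # S) j (\<Gamma>, C, k # S) d" "stack d = k # S" "step d d'"
    "stack d' = S" "run_above S (n - Suc j) d' (\<Delta>, C', S)"
proof -
  have "stack (\<Gamma>, C, k # S) = [] @ k # S" "stack (\<Delta>, C', S) = S" by simp_all
  from run_above_first_return[OF assms this] show thesis using that by blast
qed

definition pops_only :: "conf \<Rightarrow> bool" where
  "pops_only c \<longleftrightarrow> (\<forall>c1. step c c1 \<longrightarrow> (\<exists>k. stack c = k # stack c1))"

lemma run_above_from_pops_only:
  assumes "run_above S n c c'" "stack c = S" "pops_only c"
  shows "c' = c"
  using assms(1)
proof cases
  case (run_above_step c1 n')
  then obtain k where "S = k # stack c1" using assms(2,3) unfolding pops_only_def by blast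
  with run_above_extends_stack[OF \<open>run_above S n' c1 c'\<close>] show ?thesis
    using not_extends_stack_Cons by metis
qed simp

(* A failing match may stop with a non-empty argument stack, since Alt2 resumes from
   Match A' Fail for any A'. *)
fun match_final :: "var list \<Rightarrow> mtch \<Rightarrow> bool" where
  "match_final A (Ret e) \<longleftrightarrow> A = []"
| "match_final A Fail \<longleftrightarrow> True"
| "match_final A _ \<longleftrightarrow> False"

lemma pops_only_whnf: "is_whnf w \<Longrightarrow> pops_only (\<Gamma>, Eval w, S)"
  by (auto simp: pops_only_def elim: step.cases)

lemma pops_only_match_final: "match_final A r \<Longrightarrow> pops_only (\<Gamma>, Match A r, S)"
  by (cases r) (auto simp: pops_only_def elim: step.cases)

lemma step_pop_KArg:
  assumes "step d d'" "stack d = KArg y # S" "stack d' = S"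
  obtains \<Gamma> m where "d = (\<Gamma>, Eval (Lam m), KArg y # S)" "is_whnf (Lam m)"
    "d' = (\<Gamma>, Eval (Lam (Arg y m)), S)"
  using assms by (cases rule: step.cases) auto

lemma step_pop_KRet:
  assumes "step d d'" "stack d = KRet # S" "stack d' = S"
  obtains \<Gamma> e where "d = (\<Gamma>, Match [] (Ret e), KRet # S)" "d' = (\<Gamma>, Eval e, S)"
  using assms by (cases rule: step.cases) auto

lemma step_pop_KUpd:
  assumes "step d d'" "stack d = KUpd y # S" "stack d' = S"
  obtains \<Gamma> w where "d = (\<Gamma>, Eval w, KUpd y # S)" "is_whnf w" "d' = (\<Gamma>(y \<mapsto> w), Eval w, S)"
  using assms by (cases rule: step.cases) auto

lemma step_pop_KCon:
  assumes "step d d'" "stack d = KCon A c ps m # S" "stack d' = S"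
  obtains (match) \<Gamma> ys where "d = (\<Gamma>, Eval (Con c ys), KCon A c ps m # S)" "length ys = length ps"
      "d' = (\<Gamma>, Match A (chain ys ps m), S)"
    | (mismatch) \<Gamma> c' ys where "d = (\<Gamma>, Eval (Con c' ys), KCon A c ps m # S)" "c \<noteq> c'"
      "d' = (\<Gamma>, Match [] Fail, S)"
  using assms by (cases rule: step.cases) auto

lemma step_pop_KAlt:
  assumes "step d d'" "stack d = KAlt A m # S" "stack d' = S"
  obtains (Ret) \<Gamma> e where "d = (\<Gamma>, Match [] (Ret e), KAlt A m # S)" "d' = (\<Gamma>, Match [] (Ret e), S)"
    | (Fail) \<Gamma> A' where "d = (\<Gamma>, Match A' Fail, KAlt A m # S)" "d' = (\<Gamma>, Match A m, S)"
  using assms by (cases rule: step.cases) auto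

lemma step_Eval_cases:
  assumes "step (\<Gamma>, Eval e, S) c1" "extends_stack S c1"
  obtains (App) e0 y where "e = App e0 y" "c1 = (\<Gamma>, Eval e0, KArg y # S)"
    | (Sat) m where "e = Lam m" "ar m = Some 0" "c1 = (\<Gamma>, Match [] m, KRet # S)"
    | (Var) y e0 \<Gamma>0 where "\<Gamma> = \<Gamma>0(y \<mapsto> e0)" "y \<notin> dom \<Gamma>0" "e = Var y"
      "c1 = (\<Gamma>0, Eval e0, KUpd y # S)"
  using assms by (cases rule: step.cases) (auto simp: not_extends_stack_Cons)

lemma step_Match_cases:
  assumes "step (\<Gamma>, Match A m, S) c1" "extends_stack S c1"
  obtains (Return) e where "A \<noteq> []" "m = Ret e" "c1 = (\<Gamma>, Match [] (Ret (apps A e)), S)"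
    | (Bind) y A' x m' where "A = y # A'" "m = PMatch (PVar x) m'"
      "c1 = (\<Gamma>, Match A' (subst1_m y x m'), S)"
    | (Cons) y A' c ps m' where "A = y # A'" "m = PMatch (PCon c ps) m'"
      "c1 = (\<Gamma>, Eval (Var y), KCon A' c ps m' # S)"
    | (Arg) y m' where "m = Arg y m'" "c1 = (\<Gamma>, Match (y # A) m', S)"
    | (Alt) m1 m2 where "m = Alt m1 m2" "c1 = (\<Gamma>, Match A m1, KAlt A m2 # S)"
    | (Where) ys bs m' where "m = Where m' bs" "length ys = length bs" "distinct ys"
      "set ys \<inter> (heap_vars \<Gamma> \<union> set A \<union> vars_m (Where m' bs) \<union> stack_vars S) = {}"
      "c1 = (\<Gamma>(ys [\<mapsto>] map (\<lambda>(x, e). subst_e (ren (map fst bs) ys) e) bs),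
             Match A (subst_m (ren (map fst bs) ys) m'), S)"
  using assms by (cases rule: step.cases) (auto simp: not_extends_stack_Cons)

lemma upd_Cons [simp]:
  "upd (KArg y # S) = upd S" "upd (KUpd y # S) = insert y (upd S)" "upd (KRet # S) = upd S"
  "upd (KAlt A m # S) = upd S" "upd (KCon A c ps m # S) = upd S"
  by (auto simp: upd_def)

lemma upd_subset_stack_vars: "upd S \<subseteq> stack_vars S"
  by (force simp: upd_def stack_vars_def)

lemma bs_match_final: "match_final A r \<Longrightarrow> bs_match \<Gamma> L A r \<Gamma> r"
  using bs_eval_bs_match.Return[of \<Gamma> L "[]"] by (cases r) (auto simp: apps_def intro: MFail)

lemma bs_match_Where_stack_fresh:
  assumes "length ys = length bs" "distinct ys"
    and "set ys \<inter> (heap_vars \<Gamma> \<union> set A \<union> vars_m (Where m bs) \<union> stack_vars S) = {}"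
    and "bs_match (\<Gamma>(ys [\<mapsto>] map (\<lambda>(x, e). subst_e (ren (map fst bs) ys) e) bs)) (upd S) A
      (subst_m (ren (map fst bs) ys) m) \<Delta> r"
  shows "bs_match \<Gamma> (upd S) A (Where m bs) \<Delta> r"
proof (rule bs_eval_bs_match.Where[OF assms(1,2) _ assms(4)])
  show "set ys \<inter> (heap_vars \<Gamma> \<union> upd S \<union> set A \<union> vars_m (Where m bs)) = {}"
    using assms(3) upd_subset_stack_vars by blast
qed

definition eval_sound :: "nat \<Rightarrow> bool" where
  "eval_sound n \<longleftrightarrow> (\<forall>\<Gamma> e S \<Delta> w. is_whnf w \<longrightarrow> run_above S n (\<Gamma>, Eval e, S) (\<Delta>, Eval w, S)
     \<longrightarrow> bs_eval \<Gamma> (upd S) e \<Delta> w)"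

definition match_sound :: "nat \<Rightarrow> bool" where
  "match_sound n \<longleftrightarrow> (\<forall>\<Gamma> A m S \<Delta> A' r. match_final A' r
     \<longrightarrow> run_above S n (\<Gamma>, Match A m, S) (\<Delta>, Match A' r, S) \<longrightarrow> bs_match \<Gamma> (upd S) A m \<Delta> r)"

lemma eval_soundD:
  "eval_sound n \<Longrightarrow> run_above S n (\<Gamma>, Eval e, S) (\<Delta>, Eval w, S) \<Longrightarrow> is_whnf w
    \<Longrightarrow> bs_eval \<Gamma> (upd S) e \<Delta> w"
  unfolding eval_sound_def by blast

lemma match_soundD:
  "match_sound n \<Longrightarrow> run_above S n (\<Gamma>, Match A m, S) (\<Delta>, Match A' r, S) \<Longrightarrow> match_final A' r
    \<Longrightarrow> bs_match \<Gamma> (upd S) A m \<Delta> r"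
  unfolding match_sound_def by blast

lemma bs_eval_App_of_run:
  assumes IH: "\<forall>j<n. eval_sound j \<and> match_sound j"
    and run: "run_above S n (\<Gamma>, Eval e, KArg y # S) (\<Delta>, Eval w, S)" and "is_whnf w"
  shows "bs_eval \<Gamma> (upd S) (App e y) \<Delta> w"
proof -
  obtain j d d' where j: "j < n" "run_above (KArg y # S) j (\<Gamma>, Eval e, KArg y # S) d"
    "stack d = KArg y # S" "step d d'" "stack d' = S" "run_above S (n - Suc j) d' (\<Delta>, Eval w, S)"
    by (rule run_above_push_split[OF run])
  then obtain \<Gamma>1 m where d: "d = (\<Gamma>1, Eval (Lam m), KArg y # S)" "is_whnf (Lam m)"
    "d' = (\<Gamma>1, Eval (Lam (Arg y m)), S)" by (elim step_pop_KArg)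
  have "bs_eval \<Gamma> (upd S) e \<Gamma>1 (Lam m)"
    using IH j d eval_soundD[of j "KArg y # S"] by auto
  moreover have "bs_eval \<Gamma>1 (upd S) (Lam (Arg y m)) \<Delta> w"
    using IH j d \<open>is_whnf w\<close> eval_soundD[of "n - Suc j" S] by auto
  ultimately show ?thesis by (rule bs_eval_bs_match.App)
qed

lemma bs_eval_Sat_of_run:
  assumes IH: "\<forall>j<n. eval_sound j \<and> match_sound j" and "ar m = Some 0"
    and run: "run_above S n (\<Gamma>, Match [] m, KRet # S) (\<Delta>, Eval w, S)" and "is_whnf w"
  shows "bs_eval \<Gamma> (upd S) (Lam m) \<Delta> w"
proof -
  obtain j d d' where j: "j < n" "run_above (KRet # S) j (\<Gamma>, Match [] m, KRet # S) d"
    "stack d = KRet # S" "step d d'" "stack d' = S" "run_above S (n - Suc j) d' (\<Delta>, Eval w, S)"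
    by (rule run_above_push_split[OF run])
  then obtain \<Gamma>1 e where d: "d = (\<Gamma>1, Match [] (Ret e), KRet # S)" "d' = (\<Gamma>1, Eval e, S)"
    by (elim step_pop_KRet)
  have "bs_match \<Gamma> (upd S) [] m \<Gamma>1 (Ret e)"
    using IH j d match_soundD[of j "KRet # S"] by auto
  moreover have "bs_eval \<Gamma>1 (upd S) e \<Delta> w"
    using IH j d \<open>is_whnf w\<close> eval_soundD[of "n - Suc j" S] by auto
  ultimately show ?thesis by (rule bs_eval_bs_match.Sat[OF \<open>ar m = Some 0\<close>])
qed

lemma bs_eval_Var_of_run:
  assumes IH: "\<forall>j<n. eval_sound j \<and> match_sound j" and "y \<notin> dom \<Gamma>"
    and run: "run_above S n (\<Gamma>, Eval e, KUpd y # S) (\<Delta>, Eval w, S)"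
  shows "bs_eval (\<Gamma>(y \<mapsto> e)) (upd S) (Var y) \<Delta> w"
proof -
  obtain j d d' where j: "j < n" "run_above (KUpd y # S) j (\<Gamma>, Eval e, KUpd y # S) d"
    "stack d = KUpd y # S" "step d d'" "stack d' = S" "run_above S (n - Suc j) d' (\<Delta>, Eval w, S)"
    by (rule run_above_push_split[OF run])
  then obtain \<Gamma>1 w1 where d: "d = (\<Gamma>1, Eval w1, KUpd y # S)" "is_whnf w1"
    "d' = (\<Gamma>1(y \<mapsto> w1), Eval w1, S)" by (elim step_pop_KUpd)
  have "bs_eval \<Gamma> (insert y (upd S)) e \<Gamma>1 w1"
    using IH j d eval_soundD[of j "KUpd y # S"] by auto
  moreover have "(\<Delta>, Eval w, S) = d'"
    using run_above_from_pops_only[OF j(6)] d pops_only_whnf by auto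
  ultimately show ?thesis
    using bs_eval_bs_match.Var[OF \<open>y \<notin> dom \<Gamma>\<close>] d by auto
qed

lemma bs_match_PCon_of_run:
  assumes IH: "\<forall>j<n. eval_sound j \<and> match_sound j"
    and run: "run_above S n (\<Gamma>, Eval (Var y), KCon A c ps m # S) (\<Delta>, Match A' r, S)"
    and "match_final A' r"
  shows "bs_match \<Gamma> (upd S) (y # A) (PMatch (PCon c ps) m) \<Delta> r"
proof -
  obtain j d d' where j: "j < n" "run_above (KCon A c ps m # S) j (\<Gamma>, Eval (Var y), KCon A c ps m # S) d"
    "stack d = KCon A c ps m # S" "step d d'" "stack d' = S"
    "run_above S (n - Suc j) d' (\<Delta>, Match A' r, S)"
    by (rule run_above_push_split[OF run])
  from \<open>step d d'\<close> j(3,5) show ?thesis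
  proof (cases rule: step_pop_KCon)
    case (match \<Gamma>1 ys)
    have "bs_eval \<Gamma> (upd S) (Var y) \<Gamma>1 (Con c ys)"
      using IH j match eval_soundD[of j "KCon A c ps m # S"] by auto
    moreover have "bs_match \<Gamma>1 (upd S) A (chain ys ps m) \<Delta> r"
      using IH j match \<open>match_final A' r\<close> match_soundD[of "n - Suc j" S] by auto
    ultimately show ?thesis by (rule bs_eval_bs_match.Cons1[OF _ \<open>length ys = length ps\<close>])
  next
    case (mismatch \<Gamma>1 c' ys)
    have "bs_eval \<Gamma> (upd S) (Var y) \<Gamma>1 (Con c' ys)"
      using IH j mismatch eval_soundD[of j "KCon A c ps m # S"] by auto
    moreover have "(\<Delta>, Match A' r, S) = d'"
      using run_above_from_pops_only[OF j(6)] mismatch pops_only_match_final by auto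
    ultimately show ?thesis
      using bs_eval_bs_match.Cons2[OF _ \<open>c \<noteq> c'\<close>] mismatch by auto
  qed
qed

lemma bs_match_Alt_of_run:
  assumes IH: "\<forall>j<n. eval_sound j \<and> match_sound j"
    and run: "run_above S n (\<Gamma>, Match A m1, KAlt A m2 # S) (\<Delta>, Match A' r, S)"
    and "match_final A' r"
  shows "bs_match \<Gamma> (upd S) A (Alt m1 m2) \<Delta> r"
proof -
  obtain j d d' where j: "j < n" "run_above (KAlt A m2 # S) j (\<Gamma>, Match A m1, KAlt A m2 # S) d"
    "stack d = KAlt A m2 # S" "step d d'" "stack d' = S"
    "run_above S (n - Suc j) d' (\<Delta>, Match A' r, S)"
    by (rule run_above_push_split[OF run])
  from \<open>step d d'\<close> j(3,5) show ?thesis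
  proof (cases rule: step_pop_KAlt)
    case (Ret \<Gamma>1 e)
    have "bs_match \<Gamma> (upd S) A m1 \<Gamma>1 (Ret e)"
      using IH j Ret match_soundD[of j "KAlt A m2 # S"] by auto
    moreover have "(\<Delta>, Match A' r, S) = d'"
      using run_above_from_pops_only[OF j(6)] Ret pops_only_match_final by auto
    ultimately show ?thesis using Ret bs_eval_bs_match.Alt1 by auto
  next
    case (Fail \<Gamma>1 A1)
    have "bs_match \<Gamma> (upd S) A m1 \<Gamma>1 Fail"
      using IH j Fail match_soundD[of j "KAlt A m2 # S"] by auto
    moreover have "bs_match \<Gamma>1 (upd S) A m2 \<Delta> r"
      using IH j Fail \<open>match_final A' r\<close> match_soundD[of "n - Suc j" S] by auto
    ultimately show ?thesis by (rule bs_eval_bs_match.Alt2)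
  qed
qed

lemma eval_sound_step:
  assumes IH: "\<forall>j<n. eval_sound j \<and> match_sound j"
  shows "eval_sound n"
  unfolding eval_sound_def
proof (intro allI impI)
  fix \<Gamma> e S \<Delta> w assume w: "is_whnf w" and run: "run_above S n (\<Gamma>, Eval e, S) (\<Delta>, Eval w, S)"
  show "bs_eval \<Gamma> (upd S) e \<Delta> w"
  proof (cases n)
    case 0
    with run w show ?thesis by (auto elim: run_above.cases intro: bs_eval_bs_match.Whnf)
  next
    case (Suc n')
    with run obtain c1 where step: "step (\<Gamma>, Eval e, S) c1" and run1: "run_above S n' c1 (\<Delta>, Eval w, S)"
      by (auto elim: run_above_Suc_first_step)
    have IH': "\<forall>j<n'. eval_sound j \<and> match_sound j" using IH Suc by simp
    from step run_above_extends_stack[OF run1] show ?thesis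
    proof (cases rule: step_Eval_cases)
      case (App e0 y)
      then show ?thesis using bs_eval_App_of_run[OF IH'] run1 w by simp
    next
      case (Sat m)
      then show ?thesis using bs_eval_Sat_of_run[OF IH'] run1 w by simp
    next
      case (Var y e0 \<Gamma>0)
      then show ?thesis using bs_eval_Var_of_run[OF IH'] run1 by simp
    qed
  qed
qed

lemma match_sound_step:
  assumes IH: "\<forall>j<n. eval_sound j \<and> match_sound j"
  shows "match_sound n"
  unfolding match_sound_def
proof (intro allI impI)
  fix \<Gamma> A m S \<Delta> A' r assume final: "match_final A' r"
    and run: "run_above S n (\<Gamma>, Match A m, S) (\<Delta>, Match A' r, S)"
  show "bs_match \<Gamma> (upd S) A m \<Delta> r"
  proof (cases n)
    case 0
    with run final show ?thesis by (auto elim: run_above.cases intro: bs_match_final)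
  next
    case (Suc n')
    with run obtain c1 where step: "step (\<Gamma>, Match A m, S) c1"
      and run1: "run_above S n' c1 (\<Delta>, Match A' r, S)"
      by (auto elim: run_above_Suc_first_step)
    have IH': "\<forall>j<n'. eval_sound j \<and> match_sound j" using IH Suc by simp
    from step run_above_extends_stack[OF run1] show ?thesis
    proof (cases rule: step_Match_cases)
      case (Return e)
      then have "(\<Delta>, Match A' r, S) = c1"
        using run_above_from_pops_only[OF run1] pops_only_match_final by simp
      with Return show ?thesis by (auto intro: bs_eval_bs_match.Return)
    next
      case (Bind y A0 x m')
      then show ?thesis using IH Suc run1 final match_soundD[of n' S] by (auto intro: bs_eval_bs_match.Bind)
    next
      case (Cons y A0 c ps m')
      then show ?thesis using bs_match_PCon_of_run[OF IH'] run1 final by simp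
    next
      case (Arg y m')
      then show ?thesis using IH Suc run1 final match_soundD[of n' S] by (auto intro: bs_eval_bs_match.MArg)
    next
      case (Alt m1 m2)
      then show ?thesis using bs_match_Alt_of_run[OF IH'] run1 final by simp
    next
      case (Where ys bs m')
      then show ?thesis
        using IH Suc run1 final match_soundD[of n' S] by (auto intro: bs_match_Where_stack_fresh[OF Where(2-4)])
    qed
  qed
qed

lemma runs_sound: "eval_sound n \<and> match_sound n"
  by (induction n rule: less_induct) (blast intro: eval_sound_step match_sound_step)

theorem theorem4p5:
  shows "(\<forall>\<Gamma> e S \<Delta> w. is_whnf w \<longrightarrow> balanced (\<Gamma>, Eval e, S) (\<Delta>, Eval w, S)
            \<longrightarrow> bs_eval \<Gamma> (upd S) e \<Delta> w)
       \<and> (\<forall>\<Gamma> A m S \<Delta> r. is_result r \<longrightarrow> balanced (\<Gamma>, Match A m, S) (\<Delta>, Match [] r, S)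
            \<longrightarrow> bs_match \<Gamma> (upd S) A m \<Delta> r)"
proof (intro conjI allI impI)
  fix \<Gamma> e S \<Delta> w
  assume "is_whnf w" and "balanced (\<Gamma>, Eval e, S) (\<Delta>, Eval w, S)"
  then obtain n where "run_above S n (\<Gamma>, Eval e, S) (\<Delta>, Eval w, S)"
    using balanced_imp_run_above by fastforce
  with \<open>is_whnf w\<close> show "bs_eval \<Gamma> (upd S) e \<Delta> w"
    using runs_sound eval_soundD by blast
next
  fix \<Gamma> A m S \<Delta> r
  assume "is_result r" and "balanced (\<Gamma>, Match A m, S) (\<Delta>, Match [] r, S)"
  then obtain n where "run_above S n (\<Gamma>, Match A m, S) (\<Delta>, Match [] r, S)"
    using balanced_imp_run_above by fastforce
  moreover have "match_final [] r" using \<open>is_result r\<close> by (cases r) auto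
  ultimately show "bs_match \<Gamma> (upd S) A m \<Delta> r"
    using runs_sound match_soundD by blast
qed

end
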